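(* Let $z_i=(x_i,y_i)$, $i=1,\dots,n$, be training data with $y_i\in\mathbb{R}$. Index by $b$ the $B=n^n$ bootstrap samples (ordered $n$-tuples of indices in $\{1,\dots,n\}$), and for each $b$ let $\widehat{y_j}^{(b)}\in\mathbb{R}$ be the prediction for observation $j$ of the tree grown on sample $b$, assumed to be a deterministic function of $b$. Let $N_i^{(b)}$ be the number of times observation $i$ occurs in sample $b$ and $I_j^{(b)}=\mathbf{1}(N_j^{(b)}=0)$. For a weight vector $W=(w_1,\dots,w_n)$ with $\sum_i w_i=1$, let $g_W(b)$ be the probability of drawing the bootstrap sample $b$ when each of the $n$ draws selects observation $k$ with probability $w_k$, and define $$S(\hat F_W)=\sum_{j=1}^n w_j\left(y_j-\frac{\sum_b \widehat{y_j}^{(b)} I_j^{(b)} g_W(b)}{\sum_b I_j^{(b)} g_W(b)}\right)^2 .$$ Let $\hat F=\hat F_{W_0}$ with $W_0=(1/n,\dots,1/n)$, so that $S(\hat F)=\frac1n\sum_j (y_j-\widehat{y_j}^{\mathrm{OOB}})^2$ where $\widehat{y_j}^{\mathrm{OOB}}=\frac{\sum_b \widehat{y_j}^{(b)}I_j^{(b)}}{\sum_b I_j^{(b)}}$. For $\varepsilon$ near $0$ let $\hat F_{\varepsilon,i}$ be the distribution putting weight $\frac{1-\varepsilon}{n}+\varepsilon$ on $z_i$ and $\frac{1-\varepsilon}{n}$ on each $z_j$, $j\ne i$, and define $\hat D_i=\frac1n\frac{\partial S(\hat F_{\varepsilon,i})}{\partial\varepsilon}\big|_{\varepsilon=0}$.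 Then, with $e_n=(1-1/n)^{-n}$, $$\hat D_i=\frac1n\left\{(y_i-\widehat{y_i}^{\mathrm{OOB}})^2-\frac1n\sum_j (y_j-\widehat{y_j}^{\mathrm{OOB}})^2\right\}-\frac{2e_n}{n}\sum_j (y_j-\widehat{y_j}^{\mathrm{OOB}})\left\{\frac1B\sum_b (N_i^{(b)}-1)I_j^{(b)}\big(\widehat{y_j}^{(b)}-\widehat{y_j}^{\mathrm{OOB}}\big)\right\}.$$
   Context: This is the out-of-bag (OOB) error of a bagged ensemble of regression trees under squared-error loss, viewed as a functional $S$ of a weighted empirical distribution on the training data; $\hat D_i$ is $1/n$ times the empirical influence function of $S$. All sums over $b$ range over all $B=n^n$ bootstrap samples. *)

theory Defs
  imports "HOL-Analysis.Analysis" "HOL-Library.FuncSet"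
begin

text \<open>Observations are indexed by 0..n-1. A bootstrap sample is an ordered n-tuple of
  indices, represented as an extensional function b : {..<n} -> {..<n}.\<close>

definition boot_samples :: "nat \<Rightarrow> (nat \<Rightarrow> nat) set" where
  "boot_samples n = ({..<n} \<rightarrow>\<^sub>E {..<n})"

definition Ncount :: "nat \<Rightarrow> (nat \<Rightarrow> nat) \<Rightarrow> nat \<Rightarrow> nat" where
  "Ncount n b i = card {k \<in> {..<n}. b k = i}"

definition Iind :: "nat \<Rightarrow> (nat \<Rightarrow> nat) \<Rightarrow> nat \<Rightarrow> real" where
  "Iind n b j = (if Ncount n b j = 0 then 1 else 0)"

definition gW :: "nat \<Rightarrow> (nat \<Rightarrow> real) \<Rightarrow> (nat \<Rightarrow> nat) \<Rightarrow> real" where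
  "gW n W b = (\<Prod>k<n. W (b k))"

definition S_fun :: "nat \<Rightarrow> (nat \<Rightarrow> real) \<Rightarrow> ((nat \<Rightarrow> nat) \<Rightarrow> nat \<Rightarrow> real)
    \<Rightarrow> (nat \<Rightarrow> real) \<Rightarrow> real" where
  "S_fun n y yhat W =
     (\<Sum>j<n. W j * (y j -
        (\<Sum>b\<in>boot_samples n. yhat b j * Iind n b j * gW n W b) /
        (\<Sum>b\<in>boot_samples n. Iind n b j * gW n W b))\<^sup>2)"

definition W_eps :: "nat \<Rightarrow> nat \<Rightarrow> real \<Rightarrow> nat \<Rightarrow> real" where
  "W_eps n i \<epsilon> = (\<lambda>j. (1 - \<epsilon>) / real n + (if j = i then \<epsilon> else 0))"

definition y_oob :: "nat \<Rightarrow> ((nat \<Rightarrow> nat) \<Rightarrow> nat \<Rightarrow> real) \<Rightarrow> nat \<Rightarrow> real" where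
  "y_oob n yhat j =
     (\<Sum>b\<in>boot_samples n. yhat b j * Iind n b j) / (\<Sum>b\<in>boot_samples n. Iind n b j)"

definition D_hat :: "nat \<Rightarrow> (nat \<Rightarrow> real) \<Rightarrow> ((nat \<Rightarrow> nat) \<Rightarrow> nat \<Rightarrow> real) \<Rightarrow> nat \<Rightarrow> real" where
  "D_hat n y yhat i = (1 / real n) * deriv (\<lambda>\<epsilon>. S_fun n y yhat (W_eps n i \<epsilon>)) 0"

end

theory Submission
  imports Defs
begin

text \<open>Moving weight \<open>\<epsilon>\<close> towards observation \<open>i\<close> changes the probability
  \<open>g\<^sub>W(b) = \<Prod>\<^sub>k w\<^sub>b\<^sub>k\<close> of every bootstrap sample at rate \<open>n (N\<^sub>i(b) - 1) / n\<^sup>n\<close>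
  (logarithmic derivative of a product). So every \<open>g\<^sub>W\<close>-weighted sum over the samples
  is differentiable at \<open>\<epsilon> = 0\<close>, and by the quotient rule so is the weighted out-of-bag
  prediction of each \<open>j\<close>. Its denominator at \<open>\<epsilon> = 0\<close> counts the \<open>(n - 1)\<^sup>n\<close> samples
  avoiding \<open>j\<close>, which is where \<open>e\<^sub>n / n\<^sup>n = 1 / (n - 1)\<^sup>n\<close> comes from. The product rule
  applied to each summand \<open>w\<^sub>j (y\<^sub>j - \<dots>)\<^sup>2\<close> of \<open>S\<close> then gives the two terms of \<open>D\<^sub>i\<close>:
  the first from differentiating \<open>w\<^sub>j\<close>, the second from the out-of-bag predictions.\<close>

definition y_oob_weighted ::
    "nat \<Rightarrow> ((nat \<Rightarrow> nat) \<Rightarrow> nat \<Rightarrow> real) \<Rightarrow> (nat \<Rightarrow> real) \<Rightarrow> nat \<Rightarrow> real" where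
  "y_oob_weighted n yhat W j =
     (\<Sum>b\<in>boot_samples n. yhat b j * Iind n b j * gW n W b) /
     (\<Sum>b\<in>boot_samples n. Iind n b j * gW n W b)"

lemma S_fun_eq_y_oob_weighted:
  "S_fun n y yhat W = (\<Sum>j<n. W j * (y j - y_oob_weighted n yhat W j)\<^sup>2)"
  unfolding S_fun_def y_oob_weighted_def ..

lemma finite_boot_samples [simp]: "finite (boot_samples n)"
  unfolding boot_samples_def by (simp add: finite_PiE)

lemma sum_of_bool_eq_Ncount:
  "(\<Sum>k<n. of_bool (b k = i)) = real (Ncount n b i)"
  unfolding Ncount_def by (simp add: Int_def conj_commute)

lemma sum_Iind_boot_samples:
  assumes "j < n"
  shows "(\<Sum>b\<in>boot_samples n. Iind n b j) = real ((n - 1) ^ n)"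
proof -
  have "(\<Sum>b\<in>boot_samples n. Iind n b j) = real (card {b \<in> boot_samples n. Ncount n b j = 0})"
    unfolding Iind_def by (simp add: sum.If_cases) (rule arg_cong[where f = card], auto)
  also have "{b \<in> boot_samples n. Ncount n b j = 0} = {..<n} \<rightarrow>\<^sub>E {..<n} - {j}"
    unfolding boot_samples_def Ncount_def by (auto simp: PiE_iff extensional_def)
  also have "card \<dots> = (n - 1) ^ n"
    using assms by (simp add: card_PiE)
  finally show ?thesis .
qed

lemma gW_const: "gW n (\<lambda>_. c) b = c ^ n"
  unfolding gW_def by simp

lemma y_oob_weighted_const:
  assumes "c \<noteq> 0"
  shows "y_oob_weighted n yhat (\<lambda>_. c) j = y_oob n yhat j"
  using assms
  by (simp add: y_oob_weighted_def y_oob_def gW_const flip: sum_distrib_right)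

lemma W_eps_0: "W_eps n i 0 = (\<lambda>_. 1 / real n)"
  unfolding W_eps_def by auto

lemma has_field_derivative_W_eps:
  "((\<lambda>\<epsilon>. W_eps n i \<epsilon> j) has_field_derivative of_bool (j = i) - 1 / real n) (at \<epsilon>)"
proof -
  have affine: "(\<lambda>\<epsilon>. W_eps n i \<epsilon> j) = (\<lambda>\<epsilon>. 1 / real n + \<epsilon> * (of_bool (j = i) - 1 / real n))"
    unfolding W_eps_def by (simp add: diff_divide_distrib algebra_simps of_bool_def)
  show ?thesis
    unfolding affine by (rule DERIV_cong[OF DERIV_add[OF DERIV_const DERIV_cmult_right[OF DERIV_ident]]]) simp
qed

lemma has_field_derivative_gW_W_eps:
  assumes "n > 0"
  shows "((\<lambda>\<epsilon>. gW n (W_eps n i \<epsilon>) b) has_field_derivative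
           real n / real n ^ n * (real (Ncount n b i) - 1)) (at 0)"
proof -
  have w0: "W_eps n i 0 k = 1 / real n" for k
    by (simp add: W_eps_0)
  have "((\<lambda>\<epsilon>. \<Prod>k<n. W_eps n i \<epsilon> (b k)) has_field_derivative
      (\<Prod>k<n. W_eps n i 0 (b k)) *
      (\<Sum>k<n. (of_bool (b k = i) - 1 / real n) / W_eps n i 0 (b k))) (at 0)"
    using assms by (intro has_field_derivative_prod' has_field_derivative_W_eps) (simp add: w0)
  moreover have "(\<Sum>k<n. (of_bool (b k = i) - 1 / real n) / W_eps n i 0 (b k))
      = (\<Sum>k<n. real n * of_bool (b k = i) - 1)"
    using assms by (intro sum.cong) (auto simp: w0 field_simps)
  moreover have "\<dots> = real n * (real (Ncount n b i) - 1)"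
    by (simp add: sum_subtractf right_diff_distrib sum_of_bool_eq_Ncount flip: sum_distrib_left)
  ultimately show ?thesis
    unfolding gW_def by (simp add: w0 power_one_over)
qed

lemma has_field_derivative_weighted_sum_W_eps:
  assumes "n > 0"
  shows "((\<lambda>\<epsilon>. \<Sum>b\<in>boot_samples n. f b * gW n (W_eps n i \<epsilon>) b) has_field_derivative
           real n / real n ^ n * (\<Sum>b\<in>boot_samples n. f b * (real (Ncount n b i) - 1))) (at 0)"
proof -
  have "((\<lambda>\<epsilon>. \<Sum>b\<in>boot_samples n. f b * gW n (W_eps n i \<epsilon>) b) has_field_derivative
      (\<Sum>b\<in>boot_samples n. f b * (real n / real n ^ n * (real (Ncount n b i) - 1)))) (at 0)"
    by (intro DERIV_sum DERIV_cmult has_field_derivative_gW_W_eps assms)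
  then show ?thesis
    by (simp add: sum_distrib_left mult_ac)
qed

lemma has_field_derivative_y_oob_weighted_W_eps:
  assumes "n \<ge> 2" and "j < n"
  shows "((\<lambda>\<epsilon>. y_oob_weighted n yhat (W_eps n i \<epsilon>) j) has_field_derivative
           real n / real ((n - 1) ^ n) *
           (\<Sum>b\<in>boot_samples n. (real (Ncount n b i) - 1) * Iind n b j * (yhat b j - y_oob n yhat j)))
         (at 0)"
proof -
  define N where "N = real n ^ n"
  define m where "m = real ((n - 1) ^ n)"
  define P where "P = (\<Sum>b\<in>boot_samples n. yhat b j * Iind n b j * (real (Ncount n b i) - 1))"
  define R where "R = (\<Sum>b\<in>boot_samples n. Iind n b j * (real (Ncount n b i) - 1))"
  define s where "s = (\<Sum>b\<in>boot_samples n. yhat b j * Iind n b j)"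
  have pos: "N > 0" "m > 0"
    using assms(1) by (simp_all add: N_def m_def)
  have oob: "y_oob n yhat j = s / m"
    unfolding y_oob_def s_def m_def sum_Iind_boot_samples[OF assms(2)] ..
  have num0: "(\<Sum>b\<in>boot_samples n. yhat b j * Iind n b j * gW n (W_eps n i 0) b) = s / N"
    and den0: "(\<Sum>b\<in>boot_samples n. Iind n b j * gW n (W_eps n i 0) b) = m / N"
    by (simp_all add: W_eps_0 gW_const N_def s_def m_def power_one_over
        sum_Iind_boot_samples[OF assms(2)] flip: sum_divide_distrib)
  have num: "((\<lambda>\<epsilon>. \<Sum>b\<in>boot_samples n. yhat b j * Iind n b j * gW n (W_eps n i \<epsilon>) b)
      has_field_derivative real n / N * P) (at 0)"
    using has_field_derivative_weighted_sum_W_eps[of n "\<lambda>b. yhat b j * Iind n b j"] assms(1)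
    by (simp add: P_def N_def)
  have den: "((\<lambda>\<epsilon>. \<Sum>b\<in>boot_samples n. Iind n b j * gW n (W_eps n i \<epsilon>) b)
      has_field_derivative real n / N * R) (at 0)"
    using has_field_derivative_weighted_sum_W_eps[of n "\<lambda>b. Iind n b j"] assms(1)
    by (simp add: R_def N_def)
  have "((\<lambda>\<epsilon>. y_oob_weighted n yhat (W_eps n i \<epsilon>) j) has_field_derivative
      (real n / N * P * (m / N) - s / N * (real n / N * R)) / (m / N * (m / N))) (at 0)"
    unfolding y_oob_weighted_def using DERIV_divide[OF num den] pos by (simp add: num0 den0)
  moreover have "(real n / N * P * (m / N) - s / N * (real n / N * R)) / (m / N * (m / N))
      = real n / m * (P - s / m * R)"
    using pos by (simp add: field_simps)
  moreover have "(\<Sum>b\<in>boot_samples n. (real (Ncount n b i) - 1) * Iind n b j * (yhat b j - s / m))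
      = P - s / m * R"
    by (simp add: P_def R_def sum_distrib_left algebra_simps flip: sum_subtractf)
  ultimately show ?thesis
    unfolding oob m_def[symmetric] by simp
qed

lemma has_field_derivative_S_fun_W_eps:
  fixes y :: "nat \<Rightarrow> real" and yhat :: "(nat \<Rightarrow> nat) \<Rightarrow> nat \<Rightarrow> real"
  assumes "n \<ge> 2" and "i < n"
  defines "r j \<equiv> y j - y_oob n yhat j"
    and "T j \<equiv> (\<Sum>b\<in>boot_samples n. (real (Ncount n b i) - 1) * Iind n b j * (yhat b j - y_oob n yhat j))"
  shows "((\<lambda>\<epsilon>. S_fun n y yhat (W_eps n i \<epsilon>)) has_field_derivative
           (r i)\<^sup>2 - 1 / real n * (\<Sum>j<n. (r j)\<^sup>2) - 2 / real ((n - 1) ^ n) * (\<Sum>j<n. r j * T j))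
         (at 0)"
proof -
  define m where "m = real ((n - 1) ^ n)"
  have "((\<lambda>\<epsilon>. W_eps n i \<epsilon> j * (y j - y_oob_weighted n yhat (W_eps n i \<epsilon>) j)\<^sup>2)
      has_field_derivative (of_bool (j = i) - 1 / real n) * (r j)\<^sup>2 - 2 / m * (r j * T j)) (at 0)"
    if "j < n" for j
  proof -
    note w = has_field_derivative_W_eps[where n = n and i = i and j = j and \<epsilon> = 0]
    note q = has_field_derivative_y_oob_weighted_W_eps[OF assms(1) that, where yhat = yhat and i = i]
    have "((\<lambda>\<epsilon>. W_eps n i \<epsilon> j * (y j - y_oob_weighted n yhat (W_eps n i \<epsilon>) j)\<^sup>2)
        has_field_derivative (of_bool (j = i) - 1 / real n) * (r j)\<^sup>2
          + 2 * ((0 - real n / m * T j) * r j) * (1 / real n)) (at 0)"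
      using DERIV_mult[OF w DERIV_power[OF DERIV_diff[OF DERIV_const q], where n = 2]] assms(1)
      by (simp add: W_eps_0 y_oob_weighted_const r_def T_def m_def)
    then show ?thesis
      using assms(1) by (simp add: field_simps)
  qed
  then have "((\<lambda>\<epsilon>. S_fun n y yhat (W_eps n i \<epsilon>)) has_field_derivative
      (\<Sum>j<n. (of_bool (j = i) - 1 / real n) * (r j)\<^sup>2 - 2 / m * (r j * T j))) (at 0)"
    unfolding S_fun_eq_y_oob_weighted by (intro DERIV_sum) simp
  moreover have "(\<Sum>j<n. (of_bool (j = i) - 1 / real n) * (r j)\<^sup>2 - 2 / m * (r j * T j))
      = (r i)\<^sup>2 - 1 / real n * (\<Sum>j<n. (r j)\<^sup>2) - 2 / m * (\<Sum>j<n. r j * T j)"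
    using assms(2) by (simp add: sum_subtractf left_diff_distrib sum_distrib_left)
  ultimately show ?thesis
    unfolding m_def by simp
qed

lemma one_minus_inverse_power_mult_power:
  assumes "n > 0"
  shows "(1 - 1 / real n) ^ n * real (n ^ n) = real ((n - 1) ^ n)"
proof -
  have "(1 - 1 / real n) * real n = real (n - 1)"
    using assms by (simp add: field_simps of_nat_diff)
  then show ?thesis
    by (simp flip: power_mult_distrib)
qed

theorem theorem1:
  fixes n :: nat and y :: "nat \<Rightarrow> real" and yhat :: "(nat \<Rightarrow> nat) \<Rightarrow> nat \<Rightarrow> real"
    and i :: nat
  assumes "n \<ge> 2" and "i < n"
  shows "(\<lambda>\<epsilon>. S_fun n y yhat (W_eps n i \<epsilon>)) differentiable (at 0) \<and>
    D_hat n y yhat i =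
      (1 / real n) * ((y i - y_oob n yhat i)\<^sup>2 - (1 / real n) * (\<Sum>j<n. (y j - y_oob n yhat j)\<^sup>2))
      - (2 * inverse ((1 - 1 / real n) ^ n) / real n) *
        (\<Sum>j<n. (y j - y_oob n yhat j) *
          ((1 / real (n ^ n)) * (\<Sum>b\<in>boot_samples n.
              (real (Ncount n b i) - 1) * Iind n b j * (yhat b j - y_oob n yhat j))))"
proof -
  note deriv_S = has_field_derivative_S_fun_W_eps[OF assms, of y yhat]
  have n_pos: "n > 0"
    using assms(1) by simp
  have "1 - 1 / real n \<noteq> 0"
    using assms(1) by simp
  then have rearrange: "1 / real n * (a - 1 / real n * s - 2 / ((1 - 1 / real n) ^ n * real (n ^ n)) * t)
      = 1 / real n * (a - 1 / real n * s) - 2 * inverse ((1 - 1 / real n) ^ n) / real n * (1 / real (n ^ n) * t)"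
    for a s t
    using n_pos by (simp add: field_simps)
  have factor: "(\<Sum>j<n. r j * (c * t j)) = c * (\<Sum>j<n. r j * t j)" for r t :: "nat \<Rightarrow> real" and c
    by (simp add: sum_distrib_left mult.left_commute)
  have "(\<lambda>\<epsilon>. S_fun n y yhat (W_eps n i \<epsilon>)) differentiable (at 0)"
    unfolding real_differentiable_def using deriv_S by blast
  then show ?thesis
    unfolding D_hat_def DERIV_imp_deriv[OF deriv_S] factor
      one_minus_inverse_power_mult_power[OF n_pos, symmetric] rearrange
    by simp
qed

end
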